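(* Let $V_\theta$ be a real vector space of dimension $2$ and let $M\subset V_\theta\times[0,1]$ be a dichotomous item response hypersurface with associated function $f:V_\theta\to[0,1]$. Then there exists a nonzero $v\in V_\theta$ such that $f$ is constant on the line $\mathbb{R}\cdot v=\{\lambda v:\lambda\in\mathbb{R}\}$.
   Context: A dichotomous item response hypersurface (IRHS) is a $D=\dim V_\theta$ dimensional smooth submanifold $M$ of $V_\theta\times[0,1]$ such that for any two vectors $v,w\in V_\theta$, the intersection of $(w+\mathbb{R}\cdot v)\times[0,1]$ with $M$ is the graph of a monotonic function $w+\mathbb{R}\cdot v\to[0,1]$, where $w+\mathbb{R}\cdot v=\{w+\lambda v:\lambda\in\mathbb{R}\}$. A function $g:w+\mathbb{R}\cdot v\to[0,1]$ is monotonic if either $g(w+\lambda v)\le g(w+\mu v)$ for all $\lambda\le\mu$, or $g(w+\lambda v)\ge g(w+\mu v)$ for all $\lambda\le\mu$. Taking $v=0$ shows $M$ is the graph of a function $f:V_\theta\to[0,1]$, the associated function. *)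

theory Defs
  imports "HOL-Analysis.Analysis"
begin

text \<open>C^k maps between Euclidean spaces on a set S (intended for open S), defined
  via iterated continuous partial derivatives along the basis directions.\<close>
fun Ck_on :: "nat \<Rightarrow> ('a::euclidean_space \<Rightarrow> 'b::euclidean_space) \<Rightarrow> 'a set \<Rightarrow> bool" where
  "Ck_on 0 f S = continuous_on S f"
| "Ck_on (Suc k) f S =
     (continuous_on S f \<and>
      (\<forall>i\<in>Basis. \<exists>g. (\<forall>x\<in>S. ((\<lambda>t. f (x + t *\<^sub>R i)) has_vector_derivative g x) (at 0))
                     \<and> Ck_on k g S))"

definition smooth_on :: "('a::euclidean_space \<Rightarrow> 'b::euclidean_space) \<Rightarrow> 'a set \<Rightarrow> bool" where
  "smooth_on f S \<longleftrightarrow> (\<forall>k. Ck_on k f S)"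

text \<open>M is a d-dimensional embedded smooth submanifold (without boundary) of the
  Euclidean space 'b, where d = DIM('p): every point of M has a neighbourhood U
  such that M \<inter> U is the homeomorphic image of an open set of 'p under a smooth
  immersion.\<close>
definition smooth_submanifold :: "'p::euclidean_space itself \<Rightarrow> 'b::euclidean_space set \<Rightarrow> bool" where
  "smooth_submanifold _ M \<longleftrightarrow>
     (\<forall>p\<in>M. \<exists>U W (\<phi>::'p \<Rightarrow> 'b) \<psi>.
        open U \<and> p \<in> U \<and> open W \<and> smooth_on \<phi> W \<and>
        (\<forall>x\<in>W. \<exists>D. (\<phi> has_derivative D) (at x) \<and> inj D) \<and>
        homeomorphism W (M \<inter> U) \<phi> \<psi>)"

definition monotonic_on_line :: "('v::real_vector \<Rightarrow> real) \<Rightarrow> 'v \<Rightarrow> 'v \<Rightarrow> bool" where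
  "monotonic_on_line g w v \<longleftrightarrow>
     (\<forall>a b. a \<le> b \<longrightarrow> g (w + a *\<^sub>R v) \<le> g (w + b *\<^sub>R v)) \<or>
     (\<forall>a b. a \<le> b \<longrightarrow> g (w + a *\<^sub>R v) \<ge> g (w + b *\<^sub>R v))"

definition dichotomous_IRHS :: "('v::euclidean_space \<times> real) set \<Rightarrow> bool" where
  "dichotomous_IRHS M \<longleftrightarrow>
     M \<subseteq> UNIV \<times> {0..1} \<and>
     smooth_submanifold TYPE('v) M \<and>
     (\<forall>v w. \<exists>g::'v \<Rightarrow> real.
        g ` {w + a *\<^sub>R v | a. True} \<subseteq> {0..1} \<and>
        M \<inter> ({w + a *\<^sub>R v | a. True} \<times> {0..1}) = {(x, g x) | x. x \<in> {w + a *\<^sub>R v | a. True}} \<and>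
        monotonic_on_line g w v)"

end

theory Submission
  imports Defs
begin

text \<open>The surface is the graph of \<open>f\<close> and a smooth submanifold of dimension \<open>D\<close>, so by
  invariance of domain \<open>fst\<close> maps each chart homeomorphically onto an open set, which
  makes \<open>f\<close> continuous. The intersection of the surface with a line through the origin is
  a monotone graph, so \<open>f\<close> is monotone along every such line. For each \<open>N\<close> the odd function
  \<open>u \<mapsto> f (N u) - f (-N u)\<close> on the connected unit circle has a zero \<open>u\<close>, and monotonicity
  forces \<open>f\<close> to be constant on the segment from \<open>-N u\<close> to \<open>N u\<close>. The directions with this
  property form a decreasing family of nonempty compact sets, whose common point spans
  a line on which \<open>f\<close> is constant.\<close>

lemma continuous_on_graph_chart:
  fixes \<phi> :: "'a::euclidean_space \<Rightarrow> 'a \<times> 'b::real_normed_vector"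
  assumes "open W" "continuous_on W \<phi>" "inj_on \<phi> W"
    and graph: "\<And>y. y \<in> W \<Longrightarrow> snd (\<phi> y) = f (fst (\<phi> y))"
  shows "open ((fst \<circ> \<phi>) ` W)" "continuous_on ((fst \<circ> \<phi>) ` W) f"
proof -
  let ?g = "fst \<circ> \<phi>"
  have cont_g: "continuous_on W ?g"
    using assms(2) by (intro continuous_intros) (simp add: comp_def)
  have "inj_on ?g W"
  proof (rule inj_onI)
    fix a b assume "a \<in> W" "b \<in> W" "?g a = ?g b"
    then have "\<phi> a = \<phi> b" using graph by (metis comp_apply prod.collapse)
    then show "a = b" using assms(3) \<open>a \<in> W\<close> \<open>b \<in> W\<close> by (meson inj_onD)
  qed
  then show "open (?g ` W)" using invariance_of_domain[OF cont_g \<open>open W\<close>] by blast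
  let ?h = "inv_into W ?g"
  have "continuous_on (?g ` W) ?h"
    by (rule continuous_on_inverse_open[OF \<open>open W\<close> cont_g])
      (use inv_into_f_f[OF \<open>inj_on ?g W\<close>] in auto)
  then have "continuous_on (?g ` W) (\<lambda>x. snd (\<phi> (?h x)))"
    by (intro continuous_intros continuous_on_compose2[OF assms(2)])
      (auto simp: inv_into_into)
  moreover have "snd (\<phi> (?h x)) = f x" if "x \<in> ?g ` W" for x
    using that graph[of "?h x"] by (metis comp_apply f_inv_into_f inv_into_into)
  ultimately show "continuous_on (?g ` W) f"
    using continuous_on_cong by force
qed

lemma continuous_on_graph_submanifold:
  fixes f :: "'a::euclidean_space \<Rightarrow> 'b::euclidean_space"
  assumes "smooth_submanifold TYPE('a) {(x, f x) | x. True}"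
  shows "continuous_on UNIV f"
proof (rule continuous_at_imp_continuous_on, intro ballI)
  fix x
  obtain U W and \<phi> :: "'a \<Rightarrow> 'a \<times> 'b" and \<psi>
    where "(x, f x) \<in> U" and "open W"
      and hom: "homeomorphism W ({(x, f x) | x. True} \<inter> U) \<phi> \<psi>"
    using assms unfolding smooth_submanifold_def by blast
  have "continuous_on W \<phi>" "inj_on \<phi> W"
    using hom by (auto simp: homeomorphism_def intro: inj_on_inverseI)
  moreover have "snd (\<phi> y) = f (fst (\<phi> y))" if "y \<in> W" for y
    using hom that unfolding homeomorphism_def by force
  ultimately have "open ((fst \<circ> \<phi>) ` W)" "continuous_on ((fst \<circ> \<phi>) ` W) f"
    using continuous_on_graph_chart[OF \<open>open W\<close>] by blast+
  moreover have "x \<in> (fst \<circ> \<phi>) ` W"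
    using hom \<open>(x, f x) \<in> U\<close> unfolding homeomorphism_def by (force simp: image_iff)
  ultimately show "isCont f x"
    using continuous_on_eq_continuous_at by blast
qed

lemma dichotomous_IRHS_monotonic_on_line:
  assumes "dichotomous_IRHS M" and "M = {(x, f x) | x. True}"
  shows "monotonic_on_line f w v"
proof -
  let ?L = "{w + a *\<^sub>R v | a. True}"
  obtain g where g: "M \<inter> (?L \<times> {0..1}) = {(x, g x) | x. x \<in> ?L}"
    and "monotonic_on_line g w v" and "M \<subseteq> UNIV \<times> {0..1}"
    using assms(1) unfolding dichotomous_IRHS_def by blast
  have "f (w + a *\<^sub>R v) = g (w + a *\<^sub>R v)" for a
  proof -
    have "(w + a *\<^sub>R v, f (w + a *\<^sub>R v)) \<in> M \<inter> (?L \<times> {0..1})"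
      using assms(2) \<open>M \<subseteq> UNIV \<times> {0..1}\<close> by blast
    then show ?thesis unfolding g by auto
  qed
  then show ?thesis
    using \<open>monotonic_on_line g w v\<close> unfolding monotonic_on_line_def by simp
qed

lemma monotonic_on_line_eq_between:
  assumes "monotonic_on_line g w v" "g (w + a *\<^sub>R v) = g (w + b *\<^sub>R v)" "a \<le> s" "s \<le> b"
  shows "g (w + s *\<^sub>R v) = g (w + a *\<^sub>R v)"
  using assms unfolding monotonic_on_line_def by (metis order_antisym)

lemma sphere_exists_antipodal_eq:
  fixes h :: "'a::euclidean_space \<Rightarrow> real"
  assumes "2 \<le> DIM('a)" "continuous_on (sphere 0 1) h"
  shows "\<exists>u\<in>sphere 0 1. h u = h (- u)"
proof -
  define d where "d u = h u - h (- u)" for u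
  have "continuous_on (sphere 0 1) d"
    unfolding d_def
    by (intro continuous_intros continuous_on_compose2[OF assms(2)]) auto
  then have conn: "connected (d ` sphere 0 1)"
    using connected_continuous_image connected_sphere assms(1) by blast
  obtain e :: 'a where "e \<in> Basis" using nonempty_Basis by blast
  then have "d e \<in> d ` sphere 0 1" "d (- e) \<in> d ` sphere 0 1" by auto
  moreover have "d (- e) = - d e" unfolding d_def by simp
  ultimately have "0 \<in> d ` sphere 0 1"
    using connectedD_interval[OF conn] by (cases "d e \<le> 0") fastforce+
  then show ?thesis unfolding d_def by auto
qed

lemma monotonic_on_lines_imp_constant_line:
  fixes f :: "'a::euclidean_space \<Rightarrow> real"
  assumes "2 \<le> DIM('a)" and cont: "continuous_on UNIV f"
    and mono: "\<And>u. monotonic_on_line f 0 u"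
  shows "\<exists>v. v \<noteq> 0 \<and> (\<forall>t. f (t *\<^sub>R v) = f 0)"
proof -
  define S where "S N = {u \<in> sphere 0 1. \<forall>t. \<bar>t\<bar> \<le> N \<longrightarrow> f (t *\<^sub>R u) = f 0}" for N :: real
  have "compact (S N)" for N
  proof -
    have "closed {u. f (t *\<^sub>R u) = f 0}" for t
      by (intro closed_Collect_eq continuous_intros continuous_on_compose2[OF cont]) auto
    then have "closed (\<Inter>t\<in>{t. \<bar>t\<bar> \<le> N}. {u. f (t *\<^sub>R u) = f 0})" by blast
    moreover have "S N = sphere 0 1 \<inter> (\<Inter>t\<in>{t. \<bar>t\<bar> \<le> N}. {u. f (t *\<^sub>R u) = f 0})"
      unfolding S_def by blast
    ultimately show ?thesis by (simp add: compact_Int_closed)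
  qed
  moreover have "S N \<noteq> {}" for N
  proof -
    have "continuous_on (sphere 0 1) (\<lambda>u. f (N *\<^sub>R u))"
      by (intro continuous_on_compose2[OF cont] continuous_intros) auto
    then obtain u where "u \<in> sphere 0 1" "f (N *\<^sub>R u) = f (N *\<^sub>R (- u))"
      using sphere_exists_antipodal_eq[OF assms(1)] by blast
    then have u: "u \<in> sphere 0 1" "f (N *\<^sub>R u) = f ((- N) *\<^sub>R u)" by simp_all
    have between: "f (t *\<^sub>R u) = f ((- N) *\<^sub>R u)" if "-N \<le> t" "t \<le> N" for t
      using monotonic_on_line_eq_between[OF mono[of u], where a="-N" and b=N and s=t] u(2) that by simp
    have "u \<in> S N"
      unfolding S_def
    proof (intro CollectI conjI allI impI u(1))
      fix t :: real assume "\<bar>t\<bar> \<le> N"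
      then have "f (t *\<^sub>R u) = f ((- N) *\<^sub>R u)" "f (0 *\<^sub>R u) = f ((- N) *\<^sub>R u)"
        using between[of t] between[of 0] by (simp_all add: abs_le_iff)
      then show "f (t *\<^sub>R u) = f 0" by simp
    qed
    then show ?thesis by blast
  qed
  moreover have "S N \<subseteq> S M" if "M \<le> N" for M N
    using that unfolding S_def by auto
  ultimately obtain u where "u \<in> \<Inter>(range S)"
    using compact_nest[of S] by blast
  then have "u \<noteq> 0" "f (t *\<^sub>R u) = f 0" for t
    unfolding S_def by auto
  then show ?thesis by blast
qed

theorem lemma1:
  fixes M :: "('v::euclidean_space \<times> real) set" and f :: "'v \<Rightarrow> real"
  assumes "DIM('v) = 2"
    and "dichotomous_IRHS M"
    and "M = {(x, f x) | x. True}"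
  shows "\<exists>v. v \<noteq> 0 \<and> (\<forall>t. f (t *\<^sub>R v) = f 0)"
proof (rule monotonic_on_lines_imp_constant_line)
  show "2 \<le> DIM('v)" using assms(1) by simp
  show "continuous_on UNIV f"
    using assms(2,3) continuous_on_graph_submanifold unfolding dichotomous_IRHS_def by blast
  show "monotonic_on_line f 0 u" for u
    using dichotomous_IRHS_monotonic_on_line[OF assms(2,3)] .
qed

end
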